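(* Assume the index sets are ordered ($\mathcal I_1=\{1,\dots,l\}$, $\mathcal I_0=\{l+1,\dots,n\}$) and let $\psi$ be the SC decoder. Then for every decoder $\phi:\mathcal X^l\times\mathcal Y^n\to\mathcal X^n$, $$\Pr\big(\psi(A\mathbf X,\mathbf Y)\neq\mathbf X\big)\le n\,\Pr\big(\phi(A\mathbf X,\mathbf Y)\neq\mathbf X\big).$$ In particular, if $\Pr(\phi(A\mathbf X,\mathbf Y)\neq\mathbf X)=o(1/n)$ along a sequence of codes, then $\Pr(\psi(A\mathbf X,\mathbf Y)\neq\mathbf X)\to0$.
   Context: Setup: $\mathcal X,\mathcal Y$ finite, $|\mathcal X|\ge2$; $(\mathbf X,\mathbf Y)$ random on $\mathcal X^n\times\mathcal Y^n$; $A:\mathcal X^n\to\mathcal X^l$; $\{\mathcal I_0,\mathcal I_1\}$ a partition of $\{1,\dots,n\}$ with $|\mathcal I_1|=l$; $B:\mathcal X^n\to\mathcal X^{n-l}$ such that $T:\mathcal X^n\to\mathcal X^n$ is bijective, where $T(x)$ is the vector $c$ whose entries on $\mathcal I_1$ (increasing order) form $Ax$ and whose entries on $\mathcal I_0$ (increasing order) form $Bx$. Notation: $c_i^j=(c_i,\dots,c_j)$. Extended codeword: $\mathbf C=(C_1,\dots,C_n)=T(\mathbf X)$. SC decoder: for $i\in\mathcal I_0$ let $f_i(c_1^{i-1},y)\in\arg\max_{a\in\mathcal X}\mu_{C_i\mid C_1^{i-1}\mathbf Y}(a\mid c_1^{i-1},y)$ (ties and zero-probability conditions resolved by an arbitrary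 fixed rule). Given $(u,y)\in\mathcal X^l\times\mathcal Y^n$, define $\hat c$ recursively for $i=1,\dots,n$: $\hat c_{\mathcal I_1}=u$ (entries on $\mathcal I_1$ given by $u$), and $\hat c_i=f_i(\hat c_1^{i-1},y)$ for $i\in\mathcal I_0$. Then $\psi(u,y)\equiv T^{-1}(\hat c)$. *)

theory Defs
  imports "HOL-Probability.Probability"
begin

text \<open>Vectors in X^n are lists of length n (positions 1..n correspond to list
indices 0..n-1). With I_1 = {1..l}, I_0 = {l+1..n}, the extended codeword is
T x = A x @ B x.\<close>

definition ext_map :: "('x list \<Rightarrow> 'x list) \<Rightarrow> ('x list \<Rightarrow> 'x list) \<Rightarrow> 'x list \<Rightarrow> 'x list" where
  "ext_map A B x = A x @ B x"

definition codeword_pmf :: "('x list \<times> 'y list) pmf \<Rightarrow> ('x list \<Rightarrow> 'x list) \<Rightarrow> ('x list \<Rightarrow> 'x list)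
    \<Rightarrow> ('x list \<times> 'y list) pmf" where
  "codeword_pmf \<mu> A B = map_pmf (\<lambda>(x, y). (ext_map A B x, y)) \<mu>"

definition prefix_prob :: "('x list \<times> 'y list) pmf \<Rightarrow> nat \<Rightarrow> 'x list \<Rightarrow> 'y list \<Rightarrow> real" where
  "prefix_prob \<nu> i c y = measure_pmf.prob \<nu> {(cw, y'). take (i - 1) cw = c \<and> y' = y}"

definition cond_prob_C :: "('x list \<times> 'y list) pmf \<Rightarrow> nat \<Rightarrow> 'x \<Rightarrow> 'x list \<Rightarrow> 'y list \<Rightarrow> real" where
  "cond_prob_C \<nu> i a c y =
     measure_pmf.prob \<nu> {(cw, y'). take (i - 1) cw = c \<and> cw ! (i - 1) = a \<and> y' = y}
     / prefix_prob \<nu> i c y"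

text \<open>f is an admissible family of SC decision rules: for every i in I_0 and every
conditioning value of positive probability, f i c y is a maximizer of the
conditional probability; otherwise (ties, zero-probability conditions) arbitrary.\<close>
definition is_SC_rule :: "('x list \<times> 'y list) pmf \<Rightarrow> ('x list \<Rightarrow> 'x list) \<Rightarrow> ('x list \<Rightarrow> 'x list)
    \<Rightarrow> nat \<Rightarrow> nat \<Rightarrow> (nat \<Rightarrow> 'x list \<Rightarrow> 'y list \<Rightarrow> 'x) \<Rightarrow> bool" where
  "is_SC_rule \<mu> A B n l f \<longleftrightarrow>
     (\<forall>i \<in> {l+1..n}. \<forall>c y. length c = i - 1 \<longrightarrow>
        prefix_prob (codeword_pmf \<mu> A B) i c y > 0 \<longrightarrow>
        (\<forall>a. cond_prob_C (codeword_pmf \<mu> A B) i a c y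
               \<le> cond_prob_C (codeword_pmf \<mu> A B) i (f i c y) c y))"

fun sc_extend :: "(nat \<Rightarrow> 'x list \<Rightarrow> 'y list \<Rightarrow> 'x) \<Rightarrow> 'y list \<Rightarrow> 'x list \<Rightarrow> nat \<Rightarrow> 'x list" where
  "sc_extend f y c 0 = c"
| "sc_extend f y c (Suc k) =
     (let c' = sc_extend f y c k in c' @ [f (Suc (length c')) c' y])"

definition sc_decoder :: "(nat \<Rightarrow> 'x list \<Rightarrow> 'y list \<Rightarrow> 'x) \<Rightarrow> ('x list \<Rightarrow> 'x list) \<Rightarrow> ('x list \<Rightarrow> 'x list)
    \<Rightarrow> nat \<Rightarrow> nat \<Rightarrow> 'x list \<Rightarrow> 'y list \<Rightarrow> 'x list" where
  "sc_decoder f A B n l u y =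
     the_inv_into {x. length x = n} (ext_map A B) (sc_extend f y u (n - l))"

definition err_prob :: "('x list \<times> 'y list) pmf \<Rightarrow> ('x list \<Rightarrow> 'x list)
    \<Rightarrow> ('x list \<Rightarrow> 'y list \<Rightarrow> 'x list) \<Rightarrow> real" where
  "err_prob \<mu> A dec = measure_pmf.prob \<mu> {(x, y). dec (A x) y \<noteq> x}"

end

theory Submission
  imports Defs
begin

text \<open>For a position \<open>i > l\<close>, guessing the codeword symbol \<open>C\<^sub>i\<close> by the SC rule from the
true prefix \<open>C\<^sub>1 \<dots> C\<^sub>i\<^sub>-\<^sub>1\<close> and \<open>Y\<close> is a MAP decision, so it errs with probability at most
that of any other rule using the same data -- in particular the genie rule that reads position
\<open>i\<close> of \<open>T (\<phi> (A X, Y))\<close>, which errs only when \<open>\<phi>\<close> does. The SC decoder can only fail if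
one of these \<open>n - l\<close> position-wise decisions fails, and the union bound finishes the proof.\<close>

lemma measure_pmf_eq_sum_fibres:
  fixes \<nu> :: "'z pmf" and key :: "'z \<Rightarrow> 'k"
  assumes fin: "finite (set_pmf \<nu>)"
  shows "measure_pmf.prob \<nu> S
           = (\<Sum>\<kappa>\<in>key ` set_pmf \<nu>. measure_pmf.prob \<nu> {z \<in> S. key z = \<kappa>})"
proof -
  have sum_supp: "measure_pmf.prob \<nu> S' = sum (pmf \<nu>) (S' \<inter> set_pmf \<nu>)" for S'
    using fin by (metis finite_Int measure_Int_set_pmf measure_measure_pmf_finite)
  have "measure_pmf.prob \<nu> S
          = (\<Sum>\<kappa>\<in>key ` set_pmf \<nu>. sum (pmf \<nu>) {z \<in> S \<inter> set_pmf \<nu>. key z = \<kappa>})"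
    unfolding sum_supp by (rule sum.group[symmetric]) (use fin in auto)
  also have "\<dots> = (\<Sum>\<kappa>\<in>key ` set_pmf \<nu>. measure_pmf.prob \<nu> {z \<in> S. key z = \<kappa>})"
    unfolding sum_supp by (intro sum.cong refl arg_cong[where f = "sum (pmf \<nu>)"]) auto
  finally show ?thesis .
qed

lemma measure_pmf_Collect_not:
  "measure_pmf.prob \<nu> {z. \<not> P z} = 1 - measure_pmf.prob \<nu> {z. P z}"
proof -
  have "{z. \<not> P z} = space (measure_pmf \<nu>) - {z. P z}" by auto
  then show ?thesis using measure_pmf.prob_compl[of "{z. P z}" \<nu>] by simp
qed

lemma MAP_rule_minimizes_error:
  fixes \<nu> :: "'z pmf" and key :: "'z \<Rightarrow> 'k" and val :: "'z \<Rightarrow> 'v"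
  assumes fin: "finite (set_pmf \<nu>)"
    and MAP: "\<And>\<kappa> a. \<kappa> \<in> key ` set_pmf \<nu> \<Longrightarrow>
                measure_pmf.prob \<nu> {z. key z = \<kappa> \<and> val z = a}
                  \<le> measure_pmf.prob \<nu> {z. key z = \<kappa> \<and> val z = F \<kappa>}"
  shows "measure_pmf.prob \<nu> {z. val z \<noteq> F (key z)}
           \<le> measure_pmf.prob \<nu> {z. val z \<noteq> G (key z)}"
proof -
  have success: "measure_pmf.prob \<nu> {z. val z = H (key z)}
      = (\<Sum>\<kappa>\<in>key ` set_pmf \<nu>. measure_pmf.prob \<nu> {z. key z = \<kappa> \<and> val z = H \<kappa>})" for H
    by (subst measure_pmf_eq_sum_fibres[OF fin, where key = key])
       (auto intro!: sum.cong arg_cong[where f = "measure_pmf.prob \<nu>"])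
  have "measure_pmf.prob \<nu> {z. val z = G (key z)} \<le> measure_pmf.prob \<nu> {z. val z = F (key z)}"
    unfolding success by (intro sum_mono MAP)
  then show ?thesis by (simp add: measure_pmf_Collect_not)
qed

lemma SC_rule_minimizes_symbol_error:
  fixes \<nu> :: "('x list \<times> 'y list) pmf"
  assumes fin: "finite (set_pmf \<nu>)"
    and len: "\<And>c y. (c, y) \<in> set_pmf \<nu> \<Longrightarrow> i - 1 \<le> length c"
    and opt: "\<And>a c y. length c = i - 1 \<Longrightarrow> prefix_prob \<nu> i c y > 0 \<Longrightarrow>
                cond_prob_C \<nu> i a c y \<le> cond_prob_C \<nu> i (F c y) c y"
  shows "measure_pmf.prob \<nu> {(c, y). c ! (i - 1) \<noteq> F (take (i - 1) c) y}
           \<le> measure_pmf.prob \<nu> {(c, y). c ! (i - 1) \<noteq> G (take (i - 1) c) y}"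
proof -
  define key where "key z = (take (i - 1) (fst z), snd z)" for z :: "'x list \<times> 'y list"
  define val where "val z = fst z ! (i - 1)" for z :: "'x list \<times> 'y list"
  have joint: "{z. key z = (p, y0) \<and> val z = a}
                 = {(cw, y'). take (i - 1) cw = p \<and> cw ! (i - 1) = a \<and> y' = y0}" for p y0 a
    by (auto simp: key_def val_def)
  have "measure_pmf.prob \<nu> {z. val z \<noteq> case_prod F (key z)}
          \<le> measure_pmf.prob \<nu> {z. val z \<noteq> case_prod G (key z)}"
  proof (rule MAP_rule_minimizes_error[OF fin])
    fix \<kappa> a assume "\<kappa> \<in> key ` set_pmf \<nu>"
    then obtain c y where cy: "(c, y) \<in> set_pmf \<nu>" and \<kappa>: "\<kappa> = (take (i - 1) c, y)"
      by (auto simp: key_def)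
    let ?p = "prefix_prob \<nu> i (take (i - 1) c) y"
    have "?p \<noteq> 0"
      using cy unfolding prefix_prob_def measure_pmf_zero_iff by blast
    then have pos: "?p > 0"
      by (simp add: prefix_prob_def order_less_le)
    have "cond_prob_C \<nu> i a (take (i - 1) c) y
            \<le> cond_prob_C \<nu> i (F (take (i - 1) c) y) (take (i - 1) c) y"
      using opt[OF _ pos] len[OF cy] by simp
    then show "measure_pmf.prob \<nu> {z. key z = \<kappa> \<and> val z = a}
                 \<le> measure_pmf.prob \<nu> {z. key z = \<kappa> \<and> val z = case_prod F \<kappa>}"
      using pos by (simp add: \<kappa> joint cond_prob_C_def divide_le_cancel)
  qed
  moreover have "{z. val z \<noteq> case_prod H (key z)}
                   = {(c, y). c ! (i - 1) \<noteq> H (take (i - 1) c) y}" for H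
    by (auto simp: key_def val_def)
  ultimately show ?thesis by simp
qed

lemma sc_extend_eq_take:
  assumes "take (length u) c = u" and "length u + k \<le> length c"
    and "\<And>i. length u < i \<Longrightarrow> i \<le> length u + k \<Longrightarrow> f i (take (i - 1) c) y = c ! (i - 1)"
  shows "sc_extend f y u k = take (length u + k) c"
  using assms(2,3)
proof (induction k)
  case 0
  then show ?case using assms(1) by simp
next
  case (Suc k)
  then have IH: "sc_extend f y u k = take (length u + k) c" by simp
  have "f (Suc (length u + k)) (take (length u + k) c) y = c ! (length u + k)"
    using Suc.prems(2)[of "Suc (length u + k)"] by simp
  then show ?case
    using Suc.prems(1) by (simp add: IH Let_def min_absorb2 take_Suc_conv_app_nth)
qed

locale systematic_code =
  fixes \<mu> :: "('x::finite list \<times> 'y::finite list) pmf"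
    and n l :: nat
    and A B :: "'x list \<Rightarrow> 'x list"
  assumes supp: "set_pmf \<mu> \<subseteq> {(x, y). length x = n \<and> length y = n}"
    and l_le: "l \<le> n"
    and A_len: "\<And>x. length x = n \<Longrightarrow> length (A x) = l"
    and B_len: "\<And>x. length x = n \<Longrightarrow> length (B x) = n - l"
    and T_bij: "bij_betw (ext_map A B) {x. length x = n} {x. length x = n}"
begin

abbreviation T :: "'x list \<Rightarrow> 'x list" where
  "T \<equiv> ext_map A B"

lemma length_T: "length x = n \<Longrightarrow> length (T x) = n"
  using A_len B_len l_le by (simp add: ext_map_def)

lemma take_T: "length x = n \<Longrightarrow> take l (T x) = A x"
  using A_len by (simp add: ext_map_def)

lemma finite_set_pmf: "finite (set_pmf \<mu>)"
  by (rule finite_subset[OF supp finite_subset[OF _ finite_cartesian_product[OF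
        finite_lists_length_eq[of UNIV n] finite_lists_length_eq[of UNIV n]]]]) auto

lemma sc_decoder_correct:
  assumes x: "length x = n"
    and good: "\<And>i. i \<in> {l+1..n} \<Longrightarrow> f i (take (i - 1) (T x)) y = T x ! (i - 1)"
  shows "sc_decoder f A B n l (A x) y = x"
proof -
  have "sc_extend f y (A x) (n - l) = take (length (A x) + (n - l)) (T x)"
    by (rule sc_extend_eq_take) (use x A_len l_le length_T take_T good in auto)
  then have "sc_extend f y (A x) (n - l) = T x"
    using x A_len l_le length_T by simp
  then show ?thesis
    using the_inv_into_f_f[OF bij_betw_imp_inj_on[OF T_bij]] x by (simp add: sc_decoder_def)
qed

text \<open>The genie rule \<open>G\<close> is a legitimate competitor: for \<open>i > l\<close> the prefix it sees
contains \<open>A x\<close>, the input of \<open>\<phi>\<close>.\<close>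

lemma symbol_error_le_err_prob:
  assumes SC: "is_SC_rule \<mu> A B n l f" and i: "i \<in> {l+1..n}"
  shows "measure_pmf.prob \<mu> {(x, y). f i (take (i - 1) (T x)) y \<noteq> T x ! (i - 1)}
           \<le> err_prob \<mu> A \<phi>"
proof -
  let ?\<nu> = "codeword_pmf \<mu> A B"
  define G where "G p y = T (\<phi> (take l p) y) ! (i - 1)" for p y
  have lift: "measure_pmf.prob \<mu> {(x, y). P (T x) y} = measure_pmf.prob ?\<nu> {(c, y). P c y}" for P
    unfolding codeword_pmf_def measure_map_pmf
    by (intro arg_cong[where f = "measure_pmf.prob \<mu>"]) auto
  have "measure_pmf.prob ?\<nu> {(c, y). c ! (i - 1) \<noteq> f i (take (i - 1) c) y}
          \<le> measure_pmf.prob ?\<nu> {(c, y). c ! (i - 1) \<noteq> G (take (i - 1) c) y}"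
  proof (rule SC_rule_minimizes_symbol_error)
    show "finite (set_pmf ?\<nu>)"
      using finite_set_pmf by (simp add: codeword_pmf_def)
    show "i - 1 \<le> length c" if "(c, y) \<in> set_pmf ?\<nu>" for c y
      using that supp length_T i by (auto simp: codeword_pmf_def)
    show "cond_prob_C ?\<nu> i a c y \<le> cond_prob_C ?\<nu> i (f i c y) c y"
      if "length c = i - 1" "prefix_prob ?\<nu> i c y > 0" for a c y
      using SC i that unfolding is_SC_rule_def by blast
  qed
  then have "measure_pmf.prob \<mu> {(x, y). f i (take (i - 1) (T x)) y \<noteq> T x ! (i - 1)}
               \<le> measure_pmf.prob \<mu> {(x, y). T x ! (i - 1) \<noteq> G (take (i - 1) (T x)) y}"
    by (simp add: lift[symmetric] eq_commute)
  also have "\<dots> \<le> err_prob \<mu> A \<phi>"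
    unfolding err_prob_def
  proof (rule measure_pmf.finite_measure_mono_AE)
    show "AE z in measure_pmf \<mu>. z \<in> {(x, y). T x ! (i - 1) \<noteq> G (take (i - 1) (T x)) y}
                                  \<longrightarrow> z \<in> {(x, y). \<phi> (A x) y \<noteq> x}"
      using supp i by (auto simp: AE_measure_pmf_iff G_def take_T)
  qed simp
  finally show ?thesis .
qed

lemma sc_err_prob_le:
  assumes SC: "is_SC_rule \<mu> A B n l f"
  shows "err_prob \<mu> A (sc_decoder f A B n l) \<le> real (n - l) * err_prob \<mu> A \<phi>"
proof -
  define E where "E i = {(x, y). f i (take (i - 1) (T x)) y \<noteq> T x ! (i - 1)}" for i
  have "err_prob \<mu> A (sc_decoder f A B n l) \<le> measure_pmf.prob \<mu> (\<Union>i\<in>{l+1..n}. E i)"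
    unfolding err_prob_def
  proof (rule measure_pmf.finite_measure_mono_AE)
    show "AE z in measure_pmf \<mu>. z \<in> {(x, y). sc_decoder f A B n l (A x) y \<noteq> x}
                                  \<longrightarrow> z \<in> (\<Union>i\<in>{l+1..n}. E i)"
      unfolding AE_measure_pmf_iff
    proof (intro ballI impI)
      fix z assume z: "z \<in> set_pmf \<mu>" "z \<in> {(x, y). sc_decoder f A B n l (A x) y \<noteq> x}"
      obtain x y where xy: "z = (x, y)" by force
      have "length x = n" using supp z xy by auto
      then have "\<exists>i\<in>{l+1..n}. f i (take (i - 1) (T x)) y \<noteq> T x ! (i - 1)"
        using sc_decoder_correct z xy by blast
      then show "z \<in> (\<Union>i\<in>{l+1..n}. E i)" by (auto simp: xy E_def)
    qed
  qed simp
  also have "\<dots> \<le> (\<Sum>i\<in>{l+1..n}. measure_pmf.prob \<mu> (E i))"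
    by (rule measure_pmf.finite_measure_subadditive_finite) auto
  also have "\<dots> \<le> (\<Sum>i\<in>{l+1..n}. err_prob \<mu> A \<phi>)"
    unfolding E_def by (intro sum_mono symbol_error_le_err_prob[OF SC])
  finally show ?thesis by simp
qed

end

theorem theorem2:
  fixes \<mu> :: "nat \<Rightarrow> ('x::finite list \<times> 'y::finite list) pmf"
    and n l :: "nat \<Rightarrow> nat"
    and A B :: "nat \<Rightarrow> 'x list \<Rightarrow> 'x list"
    and f :: "nat \<Rightarrow> nat \<Rightarrow> 'x list \<Rightarrow> 'y list \<Rightarrow> 'x"
    and \<phi> :: "nat \<Rightarrow> 'x list \<Rightarrow> 'y list \<Rightarrow> 'x list"
  assumes card_X: "CARD('x) \<ge> 2"
    and supp: "\<And>k. set_pmf (\<mu> k) \<subseteq> {(x, y). length x = n k \<and> length y = n k}"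
    and l_le: "\<And>k. l k \<le> n k"
    and A_len: "\<And>k x. length x = n k \<Longrightarrow> length (A k x) = l k"
    and B_len: "\<And>k x. length x = n k \<Longrightarrow> length (B k x) = n k - l k"
    and T_bij: "\<And>k. bij_betw (ext_map (A k) (B k)) {x. length x = n k} {x. length x = n k}"
    and SC: "\<And>k. is_SC_rule (\<mu> k) (A k) (B k) (n k) (l k) (f k)"
  shows "(\<forall>k. err_prob (\<mu> k) (A k) (sc_decoder (f k) (A k) (B k) (n k) (l k))
              \<le> real (n k) * err_prob (\<mu> k) (A k) (\<phi> k))
         \<and> ((\<lambda>k. real (n k) * err_prob (\<mu> k) (A k) (\<phi> k)) \<longlonglongrightarrow> 0
              \<longrightarrow> (\<lambda>k. err_prob (\<mu> k) (A k) (sc_decoder (f k) (A k) (B k) (n k) (l k))) \<longlonglongrightarrow> 0)"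
proof -
  have bound: "err_prob (\<mu> k) (A k) (sc_decoder (f k) (A k) (B k) (n k) (l k))
                 \<le> real (n k) * err_prob (\<mu> k) (A k) (\<phi> k)" for k
  proof -
    interpret systematic_code "\<mu> k" "n k" "l k" "A k" "B k"
      using supp l_le A_len B_len T_bij by unfold_locales
    have "real (n k - l k) * err_prob (\<mu> k) (A k) (\<phi> k) \<le> real (n k) * err_prob (\<mu> k) (A k) (\<phi> k)"
      by (intro mult_right_mono) (auto simp: err_prob_def)
    then show ?thesis using sc_err_prob_le[OF SC] by (rule order_trans[rotated])
  qed
  have "(\<lambda>k. err_prob (\<mu> k) (A k) (sc_decoder (f k) (A k) (B k) (n k) (l k))) \<longlonglongrightarrow> 0"
    if "(\<lambda>k. real (n k) * err_prob (\<mu> k) (A k) (\<phi> k)) \<longlonglongrightarrow> 0"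
    by (rule real_tendsto_sandwich[OF _ _ tendsto_const that])
       (simp_all add: bound[unfolded err_prob_def] err_prob_def)
  with bound show ?thesis by blast
qed

end
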